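(* For every integer $m$, $G_{m-1}(\lambda)=\frac{\lambda}{1-\lambda}\,G_m'(\lambda)$ as formal power series in $\lambda$, where $G_m'$ denotes the formal derivative with respect to $\lambda$.
   Context: For an integer $m$ let $R_m(z)=\sum_{n\ge1} n^{n-m}\frac{z^n}{n!}$, a formal power series in $z$. Let $T(z)=\sum_{n\ge1}n^{n-1}\frac{z^n}{n!}$ (the tree function); it satisfies $T(z)=z e^{T(z)}$, so its compositional inverse is $z=\lambda e^{-\lambda}$. Define the formal power series $G_m(\lambda):=R_m(\lambda e^{-\lambda})$, so that $G_m(T(z))=R_m(z)$. *)

theory Defs
  imports "HOL-Computational_Algebra.Formal_Power_Series"
begin

definition R :: "int \<Rightarrow> real fps" where
  "R m = Abs_fps (\<lambda>n. if n = 0 then 0 else (real n) powi (int n - m) / fact n)"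

definition G :: "int \<Rightarrow> real fps" where
  "G m = fps_compose (R m) (fps_X * fps_exp (-1))"

end

theory Submission
  imports Defs
begin

text \<open>Substituting \<open>z = E(\<lambda>)\<close> turns the Euler operator \<open>z d/dz\<close> into \<open>(E/E') d/d\<lambda>\<close>,
  and for \<open>E = \<lambda> e\<^sup>-\<^sup>\<lambda>\<close> the factor \<open>E/E'\<close> is \<open>\<lambda>/(1 - \<lambda>)\<close>. Since \<open>z R\<^sub>m' = R\<^sub>m\<^sub>-\<^sub>1\<close>
  coefficientwise, the identity follows.\<close>

lemma R_pred_eq_X_deriv: "R (m - 1) = fps_X * fps_deriv (R m)"
proof (rule fps_ext)
  fix n
  show "fps_nth (R (m - 1)) n = fps_nth (fps_X * fps_deriv (R m)) n"
  proof (cases n)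
    case 0
    then show ?thesis by (simp add: R_def)
  next
    case (Suc k)
    have "real n powi (int n - (m - 1)) = real n powi (1 + (int n - m))"
      by (rule arg_cong[where f = "power_int (real n)"]) simp
    also have "\<dots> = real n * real n powi (int n - m)"
      using Suc by (subst power_int_add) auto
    finally have "real n powi (int n - (m - 1)) = real n * real n powi (int n - m)" .
    then show ?thesis
      using Suc by (simp add: R_def fps_X_mult_nth)
  qed
qed

lemma fps_compose_X_deriv:
  fixes f E Q :: "'a::idom fps"
  assumes "fps_nth E 0 = 0" and "E = Q * fps_deriv E"
  shows "(fps_X * fps_deriv f) oo E = Q * fps_deriv (f oo E)"
proof -
  have "(fps_X * fps_deriv f) oo E = E * (fps_deriv f oo E)"
    using assms(1) by (simp add: fps_compose_mult_distrib)
  also have "\<dots> = Q * (fps_deriv f oo E) * fps_deriv E"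
    using assms(2) by (metis mult.assoc mult.commute)
  also have "\<dots> = Q * fps_deriv (f oo E)"
    using assms(1) by (simp add: fps_compose_deriv mult.assoc)
  finally show ?thesis .
qed

lemma X_mult_exp_neg_eq:
  "fps_X * fps_exp (-1) = fps_X / (1 - fps_X) * fps_deriv (fps_X * fps_exp (-1) :: 'a::field_char_0 fps)"
proof -
  have unit: "fps_nth (1 - fps_X :: 'a fps) 0 \<noteq> 0" by simp
  have cancel: "(1 - fps_X) * inverse (1 - fps_X :: 'a fps) = 1"
    using inverse_mult_eq_1[OF unit] by (simp add: mult.commute)
  have "fps_const (-1 :: 'a) = -1" by (simp add: fps_eq_iff)
  then have "fps_deriv (fps_X * fps_exp (-1) :: 'a fps) = (1 - fps_X) * fps_exp (-1)"
    by (simp add: algebra_simps)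
  then show ?thesis
    by (simp add: fps_divide_unit[OF unit] cancel mult.assoc
        mult.left_commute[of "inverse (1 - fps_X)"])
qed

theorem corollary1:
  fixes m :: int
  shows "G (m - 1) = (fps_X / (1 - fps_X)) * fps_deriv (G m)"
  unfolding G_def R_pred_eq_X_deriv
  by (rule fps_compose_X_deriv) (simp, rule X_mult_exp_neg_eq)

end
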